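(* Let $n \geq 6$ and let $K_n$ be the complete graph on $n$ vertices, viewed as an electrical network in which every edge has conductance $1$. Then the smallest number of measurements needed to solve the faulty edge detection problem on this network is exactly $\left\lceil \frac{2n}{3}\right\rceil$.
   Context: An electrical network is a graph $G=(V,E)$ with nonnegative conductances (edge weights); here all conductances equal $1$. For vertices $r,s$, the effective resistance $R_{rs}$ is the reciprocal of the net current flowing through the network when a unit voltage difference is applied between $r$ and $s$. Faulty edge detection problem: an unknown edge $e^*\in E$ has its conductance changed from $1$ to $0$ (the edge is removed). A measurement is an unordered pair $\{r,s\}$ of vertices (any pair of vertices is allowed), and it reveals the effective resistance between $r$ and $s$ in the altered network. A set $S$ of measurements solves the problem if for every two distinct edges $e\neq e'$ of $G$ there is a pair $\{r,s\}\in S$ such that the effective resistance between $r$ and $s$ in $G$ with $e$ removed differs from that in $G$ with $e'$ removed. The quantity in question is the minimum size of such a set $S$. *)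

theory Defs
  imports Complex_Main
begin

text \<open>An electrical network with unit conductances: vertex set V, edge set E
  (edges are two-element sets of vertices).\<close>

definition nbrs :: "'a set \<Rightarrow> 'a set set \<Rightarrow> 'a \<Rightarrow> 'a set" where
  "nbrs V E x = {y \<in> V. {x, y} \<in> E}"

text \<open>Voltage vector when a unit voltage difference is applied between r and s:
  v r = 1, v s = 0, Kirchhoff's current law at every other vertex
  (current through an edge xy of conductance 1 is v x - v y).\<close>
definition is_voltage :: "'a set \<Rightarrow> 'a set set \<Rightarrow> 'a \<Rightarrow> 'a \<Rightarrow> ('a \<Rightarrow> real) \<Rightarrow> bool" where
  "is_voltage V E r s v \<longleftrightarrow> v r = 1 \<and> v s = 0 \<and> (\<forall>x. x \<notin> V \<longrightarrow> v x = 0) \<and>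
     (\<forall>x \<in> V - {r, s}. (\<Sum>y \<in> nbrs V E x. v x - v y) = 0)"

definition net_current :: "'a set \<Rightarrow> 'a set set \<Rightarrow> 'a \<Rightarrow> 'a \<Rightarrow> real" where
  "net_current V E r s = (let v = (THE v. is_voltage V E r s v) in (\<Sum>y \<in> nbrs V E r. v r - v y))"

definition eff_res :: "'a set \<Rightarrow> 'a set set \<Rightarrow> 'a \<Rightarrow> 'a \<Rightarrow> real" where
  "eff_res V E r s = 1 / net_current V E r s"

definition solves_fed :: "'a set \<Rightarrow> 'a set set \<Rightarrow> 'a set set \<Rightarrow> bool" where
  "solves_fed V E S \<longleftrightarrow>
     S \<subseteq> {{r, s} | r s. r \<in> V \<and> s \<in> V \<and> r \<noteq> s} \<and>
     (\<forall>e \<in> E. \<forall>e' \<in> E. e \<noteq> e' \<longrightarrow>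
        (\<exists>r s. {r, s} \<in> S \<and> eff_res V (E - {e}) r s \<noteq> eff_res V (E - {e'}) r s))"

definition min_measurements :: "'a set \<Rightarrow> 'a set set \<Rightarrow> nat" where
  "min_measurements V E = (LEAST k. \<exists>S. solves_fed V E S \<and> card S = k)"

definition complete_edges :: "nat \<Rightarrow> nat set set" where
  "complete_edges n = {{x, y} | x y. x < n \<and> y < n \<and> x \<noteq> y}"

end

theory Submission
  imports Defs
begin

text \<open>
  After deleting an edge e from K_n, the effective resistance between r and s depends only on
  k = |{r, s} \<inter> e|: it is 2/n, (2n - 3)/(n(n - 2)) or 2/(n - 2) for k = 0, 1, 2. This is read off
  from explicit voltages, which are unique by the maximum principle because every vertex is adjacent
  to r or s. Since the three values are distinct, a set S of measurements works iff the numbers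
  |p \<inter> e|, p \<in> S, determine the edge e of K_n.

  A spanning forest of stars with at least two leaves each has this property, and grouping the
  vertices into triples gives one with n - \<lfloor>n/3\<rfloor> = \<lceil>2n/3\<rceil> edges. Conversely, if S
  separates the edges then at most one vertex is isolated, no edge of S is an isolated edge, and when
  some vertex is isolated no vertex of degree 2 has two leaves as neighbours. A discharging
  argument then gives 3 |S| \<ge> 2n, or 4 |S| \<ge> 3 (n - 1) in the presence of an isolated vertex,
  which suffices for n \<ge> 6.
\<close>

section \<open>Voltages and effective resistance\<close>

lemma harmonic_nonpos:
  fixes d :: "'a \<Rightarrow> real"
  assumes fin: "finite V"
    and adjacent: "\<And>x. x \<in> V - {r, s} \<Longrightarrow> nbrs V E x \<inter> {r, s} \<noteq> {}"
    and boundary: "d r = 0" "d s = 0"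
    and harmonic: "\<And>x. x \<in> V - {r, s} \<Longrightarrow> (\<Sum>y\<in>nbrs V E x. d x - d y) = 0"
    and "x \<in> V"
  shows "d x \<le> 0"
proof (rule ccontr)
  assume "\<not> d x \<le> 0"
  have "Max (d ` V) \<in> d ` V" using fin \<open>x \<in> V\<close> by (intro Max_in) auto
  then obtain x0 where x0: "x0 \<in> V" "d x0 = Max (d ` V)" by auto
  have max: "d y \<le> d x0" if "y \<in> V" for y
    unfolding x0(2) using fin that by simp
  have "d x0 > 0" using max[OF \<open>x \<in> V\<close>] \<open>\<not> d x \<le> 0\<close> by linarith
  with boundary x0 have interior: "x0 \<in> V - {r, s}" by auto
  have nbrs_V: "nbrs V E x0 \<subseteq> V" by (auto simp: nbrs_def)
  \<comment> \<open>a maximum of a harmonic function is attained at all its neighbours\<close>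
  have "\<forall>y\<in>nbrs V E x0. d x0 - d y = 0"
  proof (rule sum_nonneg_eq_0_iff[THEN iffD1])
    show "finite (nbrs V E x0)" using finite_subset[OF nbrs_V fin] .
    show "\<And>y. y \<in> nbrs V E x0 \<Longrightarrow> 0 \<le> d x0 - d y" using max nbrs_V by force
  qed (rule harmonic[OF interior])
  moreover obtain y where "y \<in> nbrs V E x0" "y \<in> {r, s}" using adjacent[OF interior] by blast
  ultimately show False using boundary \<open>d x0 > 0\<close> by auto
qed

lemma voltage_unique:
  assumes "finite V"
    and adjacent: "\<And>x. x \<in> V - {r, s} \<Longrightarrow> nbrs V E x \<inter> {r, s} \<noteq> {}"
    and "is_voltage V E r s v" "is_voltage V E r s w"
  shows "v = w"
proof -
  have le: "v x - w x \<le> 0"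
    if "is_voltage V E r s v" "is_voltage V E r s w" "x \<in> V" for v w x
  proof (rule harmonic_nonpos[where d = "\<lambda>x. v x - w x", OF \<open>finite V\<close> adjacent])
    fix x assume "x \<in> V - {r, s}"
    moreover have "(\<Sum>y\<in>nbrs V E x. (v x - w x) - (v y - w y))
        = (\<Sum>y\<in>nbrs V E x. v x - v y) - (\<Sum>y\<in>nbrs V E x. w x - w y)"
      by (simp add: sum_subtractf[symmetric] algebra_simps)
    ultimately show "(\<Sum>y\<in>nbrs V E x. (v x - w x) - (v y - w y)) = 0"
      using that(1,2) by (simp add: is_voltage_def)
  qed (use that in \<open>simp_all add: is_voltage_def\<close>)
  show "v = w"
  proof
    fix x show "v x = w x"
    proof (cases "x \<in> V")
      case True
      then show ?thesis using le[OF assms(3,4) True] le[OF assms(4,3) True] by linarith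
    next
      case False
      then show ?thesis using assms(3,4) by (simp add: is_voltage_def)
    qed
  qed
qed

lemma eff_res_eq:
  assumes "finite V"
    and "\<And>x. x \<in> V - {r, s} \<Longrightarrow> nbrs V E x \<inter> {r, s} \<noteq> {}"
    and "is_voltage V E r s v"
  shows "eff_res V E r s = 1 / (\<Sum>y\<in>nbrs V E r. v r - v y)"
proof -
  have "(THE w. is_voltage V E r s w) = v"
    using assms(3) voltage_unique[OF assms(1,2) _ assms(3)] by (rule the_equality)
  then show ?thesis by (simp add: eff_res_def net_current_def)
qed

section \<open>Effective resistances in K_n minus an edge\<close>

lemma nbrs_complete_minus_edge:
  assumes "e \<in> complete_edges n" "x < n"
  shows "nbrs {..<n} (complete_edges n - {e}) x = {..<n} - (if x \<in> e then e else {x})"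
  using assms by (auto simp: nbrs_def complete_edges_def doubleton_eq_iff)

lemma complete_minus_edge_adjacent:
  assumes "e \<in> complete_edges n" "x \<in> {..<n} - {r, s}" "r < n" "s < n" "r \<noteq> s"
  shows "nbrs {..<n} (complete_edges n - {e}) x \<inter> {r, s} \<noteq> {}"
proof -
  have "\<not> (r \<in> e \<and> s \<in> e \<and> x \<in> e)"
    using assms by (auto simp: complete_edges_def)
  then show ?thesis
    using assms by (auto simp: nbrs_complete_minus_edge)
qed

lemma kirchhoff_sum_complete_minus_edge:
  fixes v :: "nat \<Rightarrow> real"
  assumes "e \<in> complete_edges n" "x < n"
  shows "(\<Sum>y\<in>nbrs {..<n} (complete_edges n - {e}) x. v x - v y)
    = (\<Sum>y<n. v x - v y) - (if x \<in> e then \<Sum>y\<in>e. v x - v y else 0)"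
proof -
  define A where "A = (if x \<in> e then e else {x})"
  have "A \<subseteq> {..<n}" using assms by (auto simp: A_def complete_edges_def)
  have "nbrs {..<n} (complete_edges n - {e}) x = {..<n} - A"
    unfolding A_def using assms by (rule nbrs_complete_minus_edge)
  then have "(\<Sum>y\<in>nbrs {..<n} (complete_edges n - {e}) x. v x - v y)
      = (\<Sum>y<n. v x - v y) - (\<Sum>y\<in>A. v x - v y)"
    by (simp only: sum_diff[OF finite_lessThan \<open>A \<subseteq> {..<n}\<close>])
  also have "(\<Sum>y\<in>A. v x - v y) = (if x \<in> e then \<Sum>y\<in>e. v x - v y else 0)"
    by (simp add: A_def)
  finally show ?thesis .
qed

lemma eff_res_complete_minus_edge_eq:
  assumes "is_voltage {..<n} (complete_edges n - {e}) r s v"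
    and "e \<in> complete_edges n" "r < n" "s < n" "r \<noteq> s"
  shows "eff_res {..<n} (complete_edges n - {e}) r s
    = 1 / (\<Sum>y\<in>nbrs {..<n} (complete_edges n - {e}) r. v r - v y)"
  using assms complete_minus_edge_adjacent by (intro eff_res_eq) auto

definition level_voltage :: "nat \<Rightarrow> nat \<Rightarrow> nat \<Rightarrow> nat set \<Rightarrow> real \<Rightarrow> real \<Rightarrow> nat \<Rightarrow> real" where
  "level_voltage n r s A \<alpha> \<beta> x =
     (if n \<le> x then 0 else if x = r then 1 else if x = s then 0 else if x \<in> A then \<alpha> else \<beta>)"

lemma sum_level_voltage:
  fixes \<alpha> \<beta> :: real
  assumes "r < n" "s < n" "r \<noteq> s" "A \<subseteq> {..<n} - {r, s}"
  shows "(\<Sum>y<n. level_voltage n r s A \<alpha> \<beta> y) = 1 + card A * \<alpha> + (real n - 2 - card A) * \<beta>"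
proof -
  let ?v = "level_voltage n r s A \<alpha> \<beta>" and ?I = "{..<n} - {r, s}"
  have "finite A" using assms(4) finite_subset by blast
  have "(\<Sum>y<n. ?v y) = (\<Sum>y\<in>?I. ?v y) + (\<Sum>y\<in>{r, s}. ?v y)"
    using assms(1,2) by (intro sum.subset_diff) auto
  also have "(\<Sum>y\<in>{r, s}. ?v y) = 1"
    using assms(1-3) by (simp add: level_voltage_def)
  also have "(\<Sum>y\<in>?I. ?v y) = (\<Sum>y\<in>?I - A. ?v y) + (\<Sum>y\<in>A. ?v y)"
    using assms(4) by (intro sum.subset_diff) auto
  also have "(\<Sum>y\<in>?I - A. ?v y) = (\<Sum>y\<in>?I - A. \<beta>)"
    by (rule sum.cong) (auto simp: level_voltage_def)
  also have "(\<Sum>y\<in>A. ?v y) = (\<Sum>y\<in>A. \<alpha>)"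
    using assms(4) by (intro sum.cong) (auto simp: level_voltage_def)
  also have "(\<Sum>y\<in>?I - A. \<beta>) = card (?I - A) * \<beta>"
    by simp
  also have "card (?I - A) = card ?I - card A"
    using \<open>finite A\<close> assms(4) by (rule card_Diff_subset)
  also have "card ?I = n - 2"
    using assms(1-3) by (simp add: card_Diff_subset)
  finally show ?thesis
    using card_mono[OF _ assms(4)] assms(1-3) by (simp add: algebra_simps)
qed

lemma is_voltage_level_voltageI:
  assumes "v = level_voltage n r s A \<alpha> \<beta>" "r < n" "s < n" "r \<noteq> s"
    and "\<And>x. x \<in> {..<n} - {r, s} \<Longrightarrow> (\<Sum>y\<in>nbrs {..<n} E x. v x - v y) = 0"
  shows "is_voltage {..<n} E r s v"
  using assms by (simp add: is_voltage_def level_voltage_def)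

lemma kirchhoff_sum_level_voltage:
  fixes \<alpha> \<beta> :: real
  assumes "e \<in> complete_edges n" "x < n" "r < n" "s < n" "r \<noteq> s" "A \<subseteq> {..<n} - {r, s}"
  defines "v \<equiv> level_voltage n r s A \<alpha> \<beta>"
  shows "(\<Sum>y\<in>nbrs {..<n} (complete_edges n - {e}) x. v x - v y)
    = n * v x - (1 + card A * \<alpha> + (real n - 2 - card A) * \<beta>)
      - (if x \<in> e then \<Sum>y\<in>e. v x - v y else 0)"
  using kirchhoff_sum_complete_minus_edge[OF assms(1,2), of v]
    sum_level_voltage[OF assms(3-6), of \<alpha> \<beta>]
  by (simp add: v_def sum_subtractf)

lemma eff_res_complete_minus_edge_balanced:
  assumes n: "3 \<le> n" and e: "e \<in> complete_edges n" and rs: "r < n" "s < n" "r \<noteq> s"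
    and balanced: "r \<in> e \<longleftrightarrow> s \<in> e"
  shows "eff_res {..<n} (complete_edges n - {e}) r s = (if r \<in> e then 2 / (real n - 2) else 2 / n)"
proof -
  define v where "v = level_voltage n r s {} (1/2) (1/2)"
  have T: "1 + real (card ({} :: nat set)) * (1/2) + (real n - 2 - real (card ({} :: nat set))) * (1/2)
      = real n / 2"
    by (simp add: field_simps)
  note kirchhoff = kirchhoff_sum_level_voltage[where A = "{}" and \<alpha> = "1/2" and \<beta> = "1/2",
    OF e _ rs, unfolded T, folded v_def]
  have "is_voltage {..<n} (complete_edges n - {e}) r s v"
  proof (rule is_voltage_level_voltageI[OF v_def rs])
    fix x assume x: "x \<in> {..<n} - {r, s}"
    \<comment> \<open>an edge through an interior vertex avoids both r and s, so all its ends sit at 1/2\<close>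
    have vx: "v x = 1/2" using x by (simp add: v_def level_voltage_def)
    have "x \<in> e \<Longrightarrow> r \<notin> e \<and> s \<notin> e"
      using e x rs balanced by (auto simp: complete_edges_def)
    then have "x \<in> e \<Longrightarrow> (\<Sum>y\<in>e. v x - v y) = 0"
      using e x by (auto simp: complete_edges_def v_def level_voltage_def)
    then show "(\<Sum>y\<in>nbrs {..<n} (complete_edges n - {e}) x. v x - v y) = 0"
      using kirchhoff[of x] x by (cases "x \<in> e") (simp_all add: vx)
  qed
  then have "eff_res {..<n} (complete_edges n - {e}) r s
      = 1 / (\<Sum>y\<in>nbrs {..<n} (complete_edges n - {e}) r. v r - v y)"
    using e rs by (rule eff_res_complete_minus_edge_eq)
  also have "(\<Sum>y\<in>nbrs {..<n} (complete_edges n - {e}) r. v r - v y)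
      = (if r \<in> e then real n / 2 - 1 else real n / 2)"
  proof -
    have "r \<in> e \<Longrightarrow> e = {r, s}" using e balanced rs by (auto simp: complete_edges_def)
    moreover have "v r = 1" "v s = 0" using rs by (simp_all add: v_def level_voltage_def)
    ultimately show ?thesis using kirchhoff[OF rs(1)] rs by auto
  qed
  also have "1 / (if r \<in> e then real n / 2 - 1 else real n / 2)
      = (if r \<in> e then 2 / (real n - 2) else 2 / n)"
    by (simp add: divide_simps)
  finally show ?thesis .
qed

lemma eff_res_complete_minus_edge_unbalanced:
  assumes n: "3 \<le> n" and rs: "r < n" "s < n" "r \<noteq> s"
    and t: "t \<in> {r, s}" and a: "a < n" "a \<notin> {r, s}"
  shows "eff_res {..<n} (complete_edges n - {{t, a}}) r s = (2 * real n - 3) / (real n * (real n - 2))"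
proof -
  \<comment> \<open>u is the potential of t; \<alpha> (at a) and \<beta> (elsewhere) solve the Kirchhoff equations
    (n - 2) \<alpha> - (n - 3) \<beta> = 1 - u at a and 3 \<beta> - \<alpha> = 1 at the other interior vertices\<close>
  define u :: real where "u = (if t = r then 1 else 0)"
  define \<alpha> where "\<alpha> = (real n - 3 * u) / (2 * real n - 3)"
  define \<beta> where "\<beta> = (real n - 1 - u) / (2 * real n - 3)"
  define v where "v = level_voltage n r s {a} \<alpha> \<beta>"
  have e: "{t, a} \<in> complete_edges n" using rs t a by (auto simp: complete_edges_def)
  have A: "{a} \<subseteq> {..<n} - {r, s}" using a by auto
  have T: "1 + real (card {a}) * \<alpha> + (real n - 2 - real (card {a})) * \<beta> = 1 + \<alpha> + (real n - 3) * \<beta>"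
    by simp
  note kirchhoff = kirchhoff_sum_level_voltage[where \<alpha> = \<alpha> and \<beta> = \<beta>, OF e _ rs A,
    unfolded T, folded v_def]
  have D: "2 * real n - 3 > 0" using n by simp
  have v: "v r = 1" "v s = 0" "v t = u" "v a = \<alpha>"
    using rs t a by (auto simp: v_def u_def level_voltage_def)
  have "is_voltage {..<n} (complete_edges n - {{t, a}}) r s v"
  proof (rule is_voltage_level_voltageI[OF v_def rs])
    fix x assume x: "x \<in> {..<n} - {r, s}"
    show "(\<Sum>y\<in>nbrs {..<n} (complete_edges n - {{t, a}}) x. v x - v y) = 0"
    proof (cases "x = a")
      case True
      have "(\<Sum>y\<in>{t, a}. v a - v y) = \<alpha> - u" using v t a by auto
      moreover have "real n * \<alpha> - (1 + \<alpha> + (real n - 3) * \<beta>) - (\<alpha> - u) = 0"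
        using D unfolding \<alpha>_def \<beta>_def by (simp add: divide_simps) algebra
      ultimately show ?thesis using kirchhoff[of a] a True v by simp
    next
      case False
      then have "v x = \<beta>" "x \<notin> {t, a}" using x t by (auto simp: v_def level_voltage_def)
      moreover have "real n * \<beta> - (1 + \<alpha> + (real n - 3) * \<beta>) = 0"
        using D unfolding \<alpha>_def \<beta>_def by (simp add: divide_simps) algebra
      ultimately show ?thesis using kirchhoff[of x] x by simp
    qed
  qed
  then have "eff_res {..<n} (complete_edges n - {{t, a}}) r s
      = 1 / (\<Sum>y\<in>nbrs {..<n} (complete_edges n - {{t, a}}) r. v r - v y)"
    using e rs by (rule eff_res_complete_minus_edge_eq)
  also have "(\<Sum>y\<in>nbrs {..<n} (complete_edges n - {{t, a}}) r. v r - v y)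
      = real n - (1 + \<alpha> + (real n - 3) * \<beta>) - u * (1 - \<alpha>)"
    using kirchhoff[of r] v t a rs by (auto simp: u_def)
  also have "\<dots> = real n * (real n - 2) / (2 * real n - 3)"
    using D unfolding u_def \<alpha>_def \<beta>_def by (auto simp: divide_simps) (simp_all add: algebra_simps)
  finally show ?thesis by simp
qed

definition deleted_edge_resistance :: "nat \<Rightarrow> nat \<Rightarrow> real" where
  "deleted_edge_resistance n k =
     (if k = 0 then 2 / n else if k = 1 then (2 * real n - 3) / (real n * (real n - 2)) else 2 / (real n - 2))"

lemma eff_res_complete_minus_edge:
  assumes n: "3 \<le> n" and e: "e \<in> complete_edges n" and rs: "r < n" "s < n" "r \<noteq> s"
  shows "eff_res {..<n} (complete_edges n - {e}) r s = deleted_edge_resistance n (card ({r, s} \<inter> e))"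
proof (cases "r \<in> e \<longleftrightarrow> s \<in> e")
  case True
  then have "card ({r, s} \<inter> e) = (if r \<in> e then 2 else 0)" using rs by auto
  then show ?thesis
    using eff_res_complete_minus_edge_balanced[OF n e rs True] by (simp add: deleted_edge_resistance_def)
next
  case False
  then have "card ({r, s} \<inter> e) = 1" by (cases "r \<in> e") (auto simp: Int_insert_left)
  moreover obtain t a where "t \<in> {r, s}" "e = {t, a}" "a < n" "a \<notin> {r, s}"
    using e False by (auto simp: complete_edges_def doubleton_eq_iff)
  ultimately show ?thesis
    using eff_res_complete_minus_edge_unbalanced[OF n rs] by (simp add: deleted_edge_resistance_def)
qed

lemma deleted_edge_resistance_eq_iff:
  assumes "3 \<le> n" "k \<le> 2" "k' \<le> 2"
  shows "deleted_edge_resistance n k = deleted_edge_resistance n k' \<longleftrightarrow> k = k'"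
proof -
  have "2 / real n < (2 * real n - 3) / (real n * (real n - 2))"
    using assms(1) by (simp add: divide_simps)
  moreover have "(2 * real n - 3) / (real n * (real n - 2)) < 2 / (real n - 2)"
    using assms(1) by (simp add: divide_simps)
  ultimately show ?thesis
    using assms(2,3) by (auto simp: deleted_edge_resistance_def le_Suc_eq numeral_2_eq_2)
qed

lemma complete_edge_iff: "{r, s} \<in> complete_edges n \<longleftrightarrow> r < n \<and> s < n \<and> r \<noteq> s"
  by (auto simp: complete_edges_def doubleton_eq_iff)

lemma eff_res_complete_minus_edge_eq_iff:
  assumes "3 \<le> n" "e \<in> complete_edges n" "e' \<in> complete_edges n" "{r, s} \<in> complete_edges n"
  shows "eff_res {..<n} (complete_edges n - {e}) r s = eff_res {..<n} (complete_edges n - {e'}) r s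
    \<longleftrightarrow> card ({r, s} \<inter> e) = card ({r, s} \<inter> e')"
proof -
  have rs: "r < n" "s < n" "r \<noteq> s" using assms(4) by (simp_all add: complete_edge_iff)
  have "card ({r, s} \<inter> f) \<le> 2" for f
    using card_mono[of "{r, s}" "{r, s} \<inter> f"] rs(3) by simp
  then show ?thesis
    using assms(1) by (simp add: eff_res_complete_minus_edge[OF assms(1) _ rs] assms(2,3)
        deleted_edge_resistance_eq_iff)
qed

section \<open>Separating edge sets\<close>

definition separating :: "nat \<Rightarrow> nat set set \<Rightarrow> bool" where
  "separating n S \<longleftrightarrow> S \<subseteq> complete_edges n \<and>
     (\<forall>e\<in>complete_edges n. \<forall>e'\<in>complete_edges n.
        (\<forall>p\<in>S. card (p \<inter> e) = card (p \<inter> e')) \<longrightarrow> e = e')"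

lemma distinguishing_measurement_iff:
  assumes "3 \<le> n" and S: "S \<subseteq> complete_edges n" and e: "e \<in> complete_edges n" "e' \<in> complete_edges n"
  shows "(\<exists>r s. {r, s} \<in> S \<and>
      eff_res {..<n} (complete_edges n - {e}) r s \<noteq> eff_res {..<n} (complete_edges n - {e'}) r s)
    \<longleftrightarrow> (\<exists>p\<in>S. card (p \<inter> e) \<noteq> card (p \<inter> e'))"
proof
  assume "\<exists>r s. {r, s} \<in> S \<and>
    eff_res {..<n} (complete_edges n - {e}) r s \<noteq> eff_res {..<n} (complete_edges n - {e'}) r s"
  then obtain r s where rs: "{r, s} \<in> S"
    "eff_res {..<n} (complete_edges n - {e}) r s \<noteq> eff_res {..<n} (complete_edges n - {e'}) r s"
    by blast
  have "card ({r, s} \<inter> e) \<noteq> card ({r, s} \<inter> e')"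
    using rs eff_res_complete_minus_edge_eq_iff[OF assms(1) e, of r s] S by auto
  with rs(1) show "\<exists>p\<in>S. card (p \<inter> e) \<noteq> card (p \<inter> e')" by blast
next
  assume "\<exists>p\<in>S. card (p \<inter> e) \<noteq> card (p \<inter> e')"
  then obtain p where p: "p \<in> S" "card (p \<inter> e) \<noteq> card (p \<inter> e')" by blast
  moreover obtain r s where "p = {r, s}"
    using p(1) S unfolding complete_edges_def by blast
  ultimately have "{r, s} \<in> S" "card ({r, s} \<inter> e) \<noteq> card ({r, s} \<inter> e')" by simp_all
  then show "\<exists>r s. {r, s} \<in> S \<and>
    eff_res {..<n} (complete_edges n - {e}) r s \<noteq> eff_res {..<n} (complete_edges n - {e'}) r s"
    using eff_res_complete_minus_edge_eq_iff[OF assms(1) e, of r s] S by auto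
qed

lemma solves_fed_complete_iff_separating:
  assumes "3 \<le> n"
  shows "solves_fed {..<n} (complete_edges n) S \<longleftrightarrow> separating n S"
proof -
  have pairs: "{{r, s} | r s. r \<in> {..<n} \<and> s \<in> {..<n} \<and> r \<noteq> s} = complete_edges n"
    by (auto simp: complete_edges_def)
  show ?thesis
  proof
    assume solves: "solves_fed {..<n} (complete_edges n) S"
    then have S: "S \<subseteq> complete_edges n" unfolding solves_fed_def pairs by blast
    show "separating n S"
      unfolding separating_def
    proof (intro conjI S ballI impI)
      fix e e' assume e: "e \<in> complete_edges n" "e' \<in> complete_edges n"
        and same: "\<forall>p\<in>S. card (p \<inter> e) = card (p \<inter> e')"
      show "e = e'"
      proof (rule ccontr)
        assume "e \<noteq> e'"
        then have "\<exists>r s. {r, s} \<in> S \<and>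
          eff_res {..<n} (complete_edges n - {e}) r s \<noteq> eff_res {..<n} (complete_edges n - {e'}) r s"
          using solves e unfolding solves_fed_def by blast
        then show False using distinguishing_measurement_iff[OF assms S e] same by simp
      qed
    qed
  next
    assume sep: "separating n S"
    then have S: "S \<subseteq> complete_edges n" unfolding separating_def by blast
    show "solves_fed {..<n} (complete_edges n) S"
      unfolding solves_fed_def pairs
    proof (intro conjI S ballI impI)
      fix e e' assume e: "e \<in> complete_edges n" "e' \<in> complete_edges n" and "e \<noteq> e'"
      then have "\<exists>p\<in>S. card (p \<inter> e) \<noteq> card (p \<inter> e')"
        using sep unfolding separating_def by blast
      then show "\<exists>r s. {r, s} \<in> S \<and>
          eff_res {..<n} (complete_edges n - {e}) r s \<noteq> eff_res {..<n} (complete_edges n - {e'}) r s"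
        using distinguishing_measurement_iff[OF assms S e] by simp
    qed
  qed
qed

lemma complete_edges_card_Int_eq_2_iff:
  assumes "p \<in> complete_edges n" "e \<in> complete_edges n"
  shows "card (p \<inter> e) = 2 \<longleftrightarrow> p = e"
proof
  assume card: "card (p \<inter> e) = 2"
  have "finite p" "card p = 2" "finite e" "card e = 2"
    using assms by (auto simp: complete_edges_def)
  then have "p \<inter> e = p" "p \<inter> e = e"
    using card by (metis Int_lower1 Int_lower2 card_subset_eq)+
  then show "p = e" by simp
qed (use assms in \<open>auto simp: complete_edges_def\<close>)

lemma complete_edges_card_Int_eq_0_iff:
  "p \<in> complete_edges n \<Longrightarrow> card (p \<inter> e) = 0 \<longleftrightarrow> p \<inter> e = {}"
  by (auto simp: complete_edges_def)

section \<open>Star forests\<close>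

locale star_forest =
  fixes n :: nat and centre :: "nat \<Rightarrow> nat"
  assumes centre_less: "x < n \<Longrightarrow> centre x < n"
    and centre_centre: "x < n \<Longrightarrow> centre (centre x) = centre x"
    and two_leaves: "z < n \<Longrightarrow> centre z = z \<Longrightarrow>
      \<exists>y1 y2. y1 < n \<and> y2 < n \<and> y1 \<noteq> y2 \<and> y1 \<noteq> z \<and> y2 \<noteq> z \<and> centre y1 = z \<and> centre y2 = z"
begin

definition star_edges :: "nat set set" where
  "star_edges = {{x, centre x} | x. x < n \<and> centre x \<noteq> x}"

lemma star_edges_subset: "star_edges \<subseteq> complete_edges n"
  using centre_less by (auto simp: star_edges_def complete_edges_def)

lemma star_edge_leafI: "x < n \<Longrightarrow> centre x \<noteq> x \<Longrightarrow> {x, centre x} \<in> star_edges"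
  by (auto simp: star_edges_def)

lemma star_edge_at_leaf:
  assumes "y < n" "centre y \<noteq> y" "p \<in> star_edges" "y \<in> p"
  shows "p = {y, centre y}"
  using assms centre_centre by (auto simp: star_edges_def)

lemma star_edge_throughE:
  assumes "x < n"
  obtains p where "p \<in> star_edges" "x \<in> p"
proof (cases "centre x = x")
  case True
  then obtain y where "y < n" "y \<noteq> x" "centre y = x" using two_leaves[OF assms] by blast
  then show ?thesis using that[of "{y, x}"] star_edge_leafI[of y] by auto
next
  case False
  then show ?thesis using that star_edge_leafI[OF assms] by blast
qed

lemma card_star_edges: "card star_edges = card {x. x < n \<and> centre x \<noteq> x}"
proof -
  have "star_edges = (\<lambda>x. {x, centre x}) ` {x. x < n \<and> centre x \<noteq> x}"
    by (auto simp: star_edges_def)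
  moreover have "inj_on (\<lambda>x. {x, centre x}) {x. x < n \<and> centre x \<noteq> x}"
    using centre_centre by (auto simp: inj_on_def doubleton_eq_iff)
  ultimately show ?thesis by (simp add: card_image)
qed

lemma centre_mem_if_same_meets:
  assumes e: "e \<in> complete_edges n" "e \<notin> star_edges" and e': "e' \<in> complete_edges n" "e' \<notin> star_edges"
    and meets: "\<And>p. p \<in> star_edges \<Longrightarrow> p \<inter> e = {} \<longleftrightarrow> p \<inter> e' = {}"
    and z: "z < n" "centre z = z" "z \<in> e'"
  shows "z \<in> e"
proof (rule ccontr)
  assume "z \<notin> e"
  obtain y1 y2 where y: "y1 < n" "y2 < n" "y1 \<noteq> y2" "y1 \<noteq> z" "y2 \<noteq> z" "centre y1 = z" "centre y2 = z"
    using two_leaves[OF z(1,2)] by blast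
  have leaf_edges: "{y1, z} \<in> star_edges" "{y2, z} \<in> star_edges"
    using star_edge_leafI[of y1] star_edge_leafI[of y2] y by auto
  \<comment> \<open>the leaf edges at z meet e', hence e, which misses z\<close>
  have "y1 \<in> e" "y2 \<in> e" using meets[OF leaf_edges(1)] meets[OF leaf_edges(2)] z(3) \<open>z \<notin> e\<close> by auto
  then have e_eq: "e = {y1, y2}" using e(1) y(3) by (auto simp: complete_edges_def)
  obtain x where e'_eq: "e' = {z, x}" "x \<noteq> z" "x < n"
    using e'(1) z(3) by (auto simp: complete_edges_def)
  have "x \<noteq> y1" "x \<noteq> y2" using e'(2) leaf_edges e'_eq(1) by (auto simp: insert_commute)
  obtain p where p: "p \<in> star_edges" "x \<in> p" using star_edge_throughE[OF e'_eq(3)] .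
  then have "p \<inter> e \<noteq> {}" using meets e'_eq(1) by blast
  then obtain y where "y \<in> p" "y \<in> {y1, y2}" using e_eq by blast
  moreover have "y < n" "centre y = z" "centre y \<noteq> y" using \<open>y \<in> {y1, y2}\<close> y by auto
  ultimately have "p = {y, z}" using star_edge_at_leaf[of y p] p(1) by simp
  then show False using p(2) \<open>x \<noteq> y1\<close> \<open>x \<noteq> y2\<close> e'_eq(2) \<open>y \<in> {y1, y2}\<close> by auto
qed

lemma subset_if_same_meets:
  assumes e: "e \<in> complete_edges n" "e \<notin> star_edges" and e': "e' \<in> complete_edges n" "e' \<notin> star_edges"
    and meets: "\<And>p. p \<in> star_edges \<Longrightarrow> p \<inter> e = {} \<longleftrightarrow> p \<inter> e' = {}"
  shows "e' \<subseteq> e"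
proof
  fix x assume "x \<in> e'"
  then have x: "x < n" using e'(1) by (auto simp: complete_edges_def)
  show "x \<in> e"
  proof (cases "centre x = x")
    case True
    then show ?thesis using centre_mem_if_same_meets[OF e e' meets x] \<open>x \<in> e'\<close> by blast
  next
    case False
    note leaf_edge = star_edge_leafI[OF x False]
    show ?thesis
    proof (rule ccontr)
      assume "x \<notin> e"
      then have "centre x \<in> e" using meets[OF leaf_edge] \<open>x \<in> e'\<close> by auto
      then have "centre x \<in> e'"
        using centre_mem_if_same_meets[OF e' e _ centre_less[OF x] centre_centre[OF x]] meets by blast
      then have "e' = {x, centre x}" using e'(1) \<open>x \<in> e'\<close> False by (auto simp: complete_edges_def)
      then show False using e'(2) leaf_edge by simp
    qed
  qed
qed

lemma separating_star_edges: "separating n star_edges"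
  unfolding separating_def
proof (intro conjI star_edges_subset ballI impI)
  fix e e' assume e: "e \<in> complete_edges n" "e' \<in> complete_edges n"
    and same: "\<forall>p\<in>star_edges. card (p \<inter> e) = card (p \<inter> e')"
  show "e = e'"
  proof (cases "e \<in> star_edges \<or> e' \<in> star_edges")
    case True
    then show ?thesis
      using same complete_edges_card_Int_eq_2_iff e by (metis Int_absorb)
  next
    case False
    have "p \<inter> e = {} \<longleftrightarrow> p \<inter> e' = {}" if "p \<in> star_edges" for p
      using same that star_edges_subset complete_edges_card_Int_eq_0_iff by (metis subsetD)
    then show ?thesis
      using subset_if_same_meets e False by (metis subset_antisym)
  qed
qed

end

text \<open>The vertices are grouped into the triples 3j, 3j+1, 3j+2 centred at 3j+1; the at most two
  vertices left over join the last triple.\<close>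
definition block_centre :: "nat \<Rightarrow> nat \<Rightarrow> nat" where
  "block_centre n x = 3 * min (x div 3) (n div 3 - 1) + 1"

lemma block_centre_eq: "j < n div 3 \<Longrightarrow> x div 3 = j \<Longrightarrow> block_centre n x = 3 * j + 1"
  by (simp add: block_centre_def)

lemma block_centreE:
  assumes "3 \<le> n"
  obtains j where "j < n div 3" "block_centre n x = 3 * j + 1"
proof
  show "min (x div 3) (n div 3 - 1) < n div 3" using assms by auto
qed (simp add: block_centre_def)

lemma star_forest_block_centre:
  assumes "3 \<le> n"
  shows "star_forest n (block_centre n)"
proof
  fix x assume "x < n"
  obtain j where j: "j < n div 3" "block_centre n x = 3 * j + 1"
    using block_centreE[OF assms] .
  then show "block_centre n x < n" by linarith
  show "block_centre n (block_centre n x) = block_centre n x"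
    using j by (simp add: block_centre_eq)
next
  fix z assume "z < n" "block_centre n z = z"
  moreover obtain j where j: "j < n div 3" "block_centre n z = 3 * j + 1"
    using block_centreE[OF assms] .
  ultimately have j: "j < n div 3" "z = 3 * j + 1" by simp_all
  then have "block_centre n (3 * j) = z" "block_centre n (3 * j + 2) = z" "3 * j + 2 < n"
    by (auto simp: block_centre_eq)
  then show "\<exists>y1 y2. y1 < n \<and> y2 < n \<and> y1 \<noteq> y2 \<and> y1 \<noteq> z \<and> y2 \<noteq> z \<and>
      block_centre n y1 = z \<and> block_centre n y2 = z"
    using j by (intro exI[of _ "3 * j"] exI[of _ "3 * j + 2"]) auto
qed

lemma card_block_leaves:
  assumes "3 \<le> n"
  shows "card {x. x < n \<and> block_centre n x \<noteq> x} = n - n div 3"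
proof -
  have centres: "{x. x < n \<and> block_centre n x = x} = (\<lambda>j. 3 * j + 1) ` {..<n div 3}"
  proof (intro set_eqI iffI)
    fix x assume "x \<in> {x. x < n \<and> block_centre n x = x}"
    then show "x \<in> (\<lambda>j. 3 * j + 1) ` {..<n div 3}"
      using block_centreE[OF assms, of x] by auto
  next
    fix x assume "x \<in> (\<lambda>j. 3 * j + 1) ` {..<n div 3}"
    then show "x \<in> {x. x < n \<and> block_centre n x = x}"
      by (auto simp: block_centre_eq)
  qed
  have "{x. x < n \<and> block_centre n x \<noteq> x} = {..<n} - {x. x < n \<and> block_centre n x = x}"
    by auto
  also have "card \<dots> = n - n div 3"
    by (subst card_Diff_subset) (auto simp: centres card_image inj_on_def)
  finally show ?thesis .
qed

section \<open>The lower bound by discharging\<close>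

lemma finite_complete_edges: "finite (complete_edges n)"
  by (rule finite_subset[of _ "Pow {..<n}"]) (auto simp: complete_edges_def)

lemma separatingD:
  assumes "separating n S" "e \<in> complete_edges n" "e' \<in> complete_edges n"
    and "\<And>p. p \<in> S \<Longrightarrow> card (p \<inter> e) = card (p \<inter> e')"
  shows "e = e'"
proof -
  have "\<forall>e\<in>complete_edges n. \<forall>e'\<in>complete_edges n.
      (\<forall>p\<in>S. card (p \<inter> e) = card (p \<inter> e')) \<longrightarrow> e = e'"
    using assms(1) unfolding separating_def by (rule conjunct2)
  then show ?thesis using assms(2-4) by blast
qed

lemma third_vertexE:
  fixes x y :: nat
  assumes "3 \<le> n"
  obtains w where "w < n" "w \<noteq> x" "w \<noteq> y"
proof -
  have "\<exists>w\<in>{0, 1, 2 :: nat}. w \<noteq> x \<and> w \<noteq> y" by auto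
  then obtain w where "w \<in> {0, 1, 2 :: nat}" "w \<noteq> x" "w \<noteq> y" by blast
  then show ?thesis using that[of w] assms by auto
qed

definition deg :: "'a set set \<Rightarrow> 'a \<Rightarrow> nat" where
  "deg S x = card {p \<in> S. x \<in> p}"

lemma deg_eq_0_iff: "finite S \<Longrightarrow> deg S x = 0 \<longleftrightarrow> x \<notin> \<Union>S"
  by (auto simp: deg_def)

lemma deg_eq_1_unique:
  assumes "deg S x = 1" "p \<in> S" "x \<in> p" "q \<in> S" "x \<in> q"
  shows "p = q"
proof -
  obtain p0 where p0: "{p \<in> S. x \<in> p} = {p0}"
    using assms(1) unfolding deg_def by (rule card_1_singletonE)
  have "p \<in> {p \<in> S. x \<in> p}" "q \<in> {p \<in> S. x \<in> p}" using assms(2-) by simp_all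
  then show ?thesis unfolding p0 by simp
qed

lemma separating_isolated_unique:
  assumes sep: "separating n S" and n: "3 \<le> n"
    and xy: "x < n" "y < n" "x \<notin> \<Union>S" "y \<notin> \<Union>S"
  shows "x = y"
proof (rule ccontr)
  assume "x \<noteq> y"
  obtain w where w: "w < n" "w \<noteq> x" "w \<noteq> y" using third_vertexE[OF n] .
  have "{x, w} = {y, w}"
  proof (rule separatingD[OF sep])
    show "{x, w} \<in> complete_edges n" "{y, w} \<in> complete_edges n"
      using xy w by (simp_all add: complete_edge_iff)
    fix p assume "p \<in> S"
    then have "p \<inter> {x, w} = p \<inter> {y, w}" using xy by auto
    then show "card (p \<inter> {x, w}) = card (p \<inter> {y, w})" by simp
  qed
  then show False using \<open>x \<noteq> y\<close> w by (auto simp: doubleton_eq_iff)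
qed

lemma separating_no_isolated_edge:
  assumes sep: "separating n S" and n: "3 \<le> n"
    and xy: "{x, y} \<in> S" "x \<noteq> y" "deg S x = 1" "deg S y = 1"
  shows False
proof -
  have "x < n" "y < n" using sep xy(1) by (auto simp: separating_def complete_edge_iff)
  obtain w where w: "w < n" "w \<noteq> x" "w \<noteq> y" using third_vertexE[OF n] .
  \<comment> \<open>an edge {x, y} of S whose ends lie on no other edge cannot tell x from y\<close>
  have "{x, w} = {y, w}"
  proof (rule separatingD[OF sep])
    show "{x, w} \<in> complete_edges n" "{y, w} \<in> complete_edges n"
      using \<open>x < n\<close> \<open>y < n\<close> w by (simp_all add: complete_edge_iff)
    fix p assume p: "p \<in> S"
    show "card (p \<inter> {x, w}) = card (p \<inter> {y, w})"
    proof (cases "p = {x, y}")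
      case True
      then show ?thesis using w by (simp add: Int_insert_left)
    next
      case False
      have "x \<notin> p" "y \<notin> p"
        using deg_eq_1_unique[OF xy(3) p _ xy(1)] deg_eq_1_unique[OF xy(4) p _ xy(1)] False by auto
      then have "p \<inter> {x, w} = p \<inter> {y, w}" by auto
      then show ?thesis by simp
    qed
  qed
  then show False using xy(2) w by (auto simp: doubleton_eq_iff)
qed

lemma separating_no_cherry:
  assumes sep: "separating n S" and z: "z < n" "z \<notin> \<Union>S"
    and x: "deg S x = 2" and leaves: "\<And>p. p \<in> S \<Longrightarrow> x \<in> p \<Longrightarrow> \<exists>y\<in>p - {x}. deg S y = 1"
  shows False
proof -
  have S: "S \<subseteq> complete_edges n" using sep by (simp add: separating_def)
  obtain p1 p2 where p12: "{p \<in> S. x \<in> p} = {p1, p2}" "p1 \<noteq> p2"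
    using x unfolding deg_def by (auto simp: card_2_iff)
  then have p: "p1 \<in> S" "x \<in> p1" "p2 \<in> S" "x \<in> p2" by blast+
  obtain y1 where y1: "y1 \<in> p1" "y1 \<noteq> x" "deg S y1 = 1" using leaves[OF p(1,2)] by blast
  obtain y2 where y2: "y2 \<in> p2" "y2 \<noteq> x" "deg S y2 = 1" using leaves[OF p(3,4)] by blast
  have p1_eq: "p1 = {x, y1}" and p2_eq: "p2 = {x, y2}"
    using S p y1 y2 by (auto simp: complete_edges_def)
  have "y1 \<noteq> y2" using p12(2) p1_eq p2_eq by auto
  have "x < n" "y1 < n" "y2 < n" using S p p1_eq p2_eq by (auto simp: complete_edge_iff)
  have "z \<noteq> x" "z \<noteq> y1" "z \<noteq> y2" using z(2) p y1 y2 by auto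
  \<comment> \<open>the two leaves at x and the pair x, z meet every edge of S in the same number of points\<close>
  have "{y1, y2} = {x, z}"
  proof (rule separatingD[OF sep])
    show "{y1, y2} \<in> complete_edges n" "{x, z} \<in> complete_edges n"
      using \<open>y1 \<noteq> y2\<close> \<open>x < n\<close> \<open>y1 < n\<close> \<open>y2 < n\<close> \<open>z \<noteq> x\<close> z(1)
      by (auto simp: complete_edge_iff)
    fix p assume "p \<in> S"
    show "card (p \<inter> {y1, y2}) = card (p \<inter> {x, z})"
    proof (cases "x \<in> p")
      case True
      then have "p = {x, y1} \<or> p = {x, y2}" using p12 p1_eq p2_eq \<open>p \<in> S\<close> by blast
      then show ?thesis using \<open>y1 \<noteq> y2\<close> y1 y2 \<open>z \<noteq> x\<close> \<open>z \<noteq> y1\<close> \<open>z \<noteq> y2\<close> by auto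
    next
      case False
      have "y1 \<notin> p" "y2 \<notin> p"
        using deg_eq_1_unique[OF y1(3) \<open>p \<in> S\<close> _ p(1)] deg_eq_1_unique[OF y2(3) \<open>p \<in> S\<close> _ p(3)]
          y1(1) y2(1) p(2,4) False by auto
      moreover have "z \<notin> p" using z(2) \<open>p \<in> S\<close> by blast
      ultimately show ?thesis using False by simp
    qed
  qed
  then show False using y1(2) y2(2) by (auto simp: doubleton_eq_iff)
qed

text \<open>Discharging: every edge of S carries charge 2, split evenly between its ends, except that
  a vertex of degree 1 takes the share b from its edge.\<close>
definition weight :: "real \<Rightarrow> 'a set set \<Rightarrow> 'a \<Rightarrow> 'a set \<Rightarrow> real" where
  "weight b S x p = (if deg S x = 1 then b else if \<exists>y\<in>p - {x}. deg S y = 1 then 2 - b else 1)"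

lemma weight_edge_sum:
  assumes "x \<noteq> y" "\<not> (deg S x = 1 \<and> deg S y = 1)"
  shows "(\<Sum>z\<in>{x, y}. weight b S z {x, y}) = 2"
  using assms by (auto simp: weight_def)

lemma weight_ge:
  assumes "1 \<le> b" "deg S x \<noteq> 1"
  shows "2 - b \<le> weight b S x p"
  using assms by (simp add: weight_def)

lemma discharging:
  fixes f :: "'a \<Rightarrow> 'a set \<Rightarrow> real"
  assumes fin: "finite S" "\<And>p. p \<in> S \<Longrightarrow> finite p"
    and edge: "\<And>p. p \<in> S \<Longrightarrow> (\<Sum>x\<in>p. f x p) \<le> c"
    and vertex: "\<And>x. x \<in> \<Union>S \<Longrightarrow> b \<le> (\<Sum>p\<in>{p \<in> S. x \<in> p}. f x p)"
  shows "b * card (\<Union>S) \<le> c * card S"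
proof -
  have "finite (\<Union>S)" using fin by blast
  have "b * card (\<Union>S) = (\<Sum>x\<in>\<Union>S. b)" by simp
  also have "\<dots> \<le> (\<Sum>x\<in>\<Union>S. \<Sum>p\<in>{p \<in> S. x \<in> p}. f x p)"
    by (rule sum_mono) (rule vertex)
  also have "\<dots> = (\<Sum>p\<in>S. \<Sum>x\<in>{x \<in> \<Union>S. x \<in> p}. f x p)"
    using \<open>finite (\<Union>S)\<close> fin(1) by (rule sum.swap_restrict)
  also have "\<dots> = (\<Sum>p\<in>S. \<Sum>x\<in>p. f x p)"
    by (intro sum.cong refl arg_cong[where f = "\<lambda>A. sum _ A"]) blast
  also have "\<dots> \<le> (\<Sum>p\<in>S. c)"
    by (rule sum_mono) (rule edge)
  finally show ?thesis by (simp add: mult.commute)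
qed

lemma weight_vertex_sum_leaf:
  assumes "deg S x = 1"
  shows "(\<Sum>p\<in>{p \<in> S. x \<in> p}. weight b S x p) = b"
  using assms by (simp add: weight_def deg_def)

lemma weight_vertex_sum_ge_4_3:
  assumes "finite S" "x \<in> \<Union>S"
  shows "4/3 \<le> (\<Sum>p\<in>{p \<in> S. x \<in> p}. weight (4/3) S x p)"
proof (cases "deg S x = 1")
  case True
  then show ?thesis by (simp add: weight_vertex_sum_leaf)
next
  case False
  then have "2 \<le> deg S x" using assms deg_eq_0_iff by fastforce
  moreover have "deg S x * (2/3) \<le> (\<Sum>p\<in>{p \<in> S. x \<in> p}. weight (4/3) S x p)"
    unfolding deg_def using weight_ge[of "4/3" S x] False by (intro sum_bounded_below) simp
  ultimately show ?thesis by linarith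
qed

lemma weight_vertex_sum_ge_3_2:
  assumes "finite S" "x \<in> \<Union>S"
    and no_cherry: "\<not> (deg S x = 2 \<and> (\<forall>p\<in>S. x \<in> p \<longrightarrow> (\<exists>y\<in>p - {x}. deg S y = 1)))"
  shows "3/2 \<le> (\<Sum>p\<in>{p \<in> S. x \<in> p}. weight (3/2) S x p)"
proof -
  have lb: "deg S x * (1/2) \<le> (\<Sum>p\<in>{p \<in> S. x \<in> p}. weight (3/2) S x p)" if "deg S x \<noteq> 1"
    unfolding deg_def using weight_ge[of "3/2" S x] that by (intro sum_bounded_below) simp
  consider "deg S x = 1" | "deg S x = 2" | "3 \<le> deg S x"
    using assms(1,2) deg_eq_0_iff by fastforce
  then show ?thesis
  proof cases
    case 1
    then show ?thesis by (simp add: weight_vertex_sum_leaf)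
  next
    case 2
    then obtain p1 p2 where p12: "{p \<in> S. x \<in> p} = {p1, p2}" "p1 \<noteq> p2"
      unfolding deg_def by (auto simp: card_2_iff)
    \<comment> \<open>not both edges at x end in a leaf, so one of them leaves x its full share 1\<close>
    obtain q where "q \<in> {p1, p2}" "\<not> (\<exists>y\<in>q - {x}. deg S y = 1)"
      using no_cherry 2 p12(1) by blast
    then have "weight (3/2) S x q = 1" using 2 by (simp add: weight_def)
    moreover have "weight (3/2) S x p \<ge> 1/2" for p using weight_ge[of "3/2" S x p] 2 by simp
    ultimately show ?thesis
      using p12 \<open>q \<in> {p1, p2}\<close> by (auto simp: insert_commute)
  next
    case 3
    then show ?thesis using lb by linarith
  qed
qed

lemma separating_card_ge:
  assumes sep: "separating n S" and n: "6 \<le> n"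
  shows "2 * n \<le> 3 * card S"
proof -
  have S: "S \<subseteq> complete_edges n" using sep by (simp add: separating_def)
  then have fin: "finite S" using finite_complete_edges finite_subset by blast
  have edges: "p \<in> S \<Longrightarrow> \<exists>x y. p = {x, y} \<and> x \<noteq> y" for p
    using S unfolding complete_edges_def by blast
  then have fin_edges: "p \<in> S \<Longrightarrow> finite p" for p by fastforce
  have covered: "\<Union>S \<subseteq> {..<n}" using S by (auto simp: complete_edges_def)
  have edge_sum: "(\<Sum>x\<in>p. weight b S x p) \<le> 2" if p: "p \<in> S" for b p
  proof -
    obtain x y where "p = {x, y}" "x \<noteq> y" using edges[OF p] by blast
    then show ?thesis
      using weight_edge_sum separating_no_isolated_edge[OF sep] n p by fastforce
  qed
  show ?thesis
  proof (cases "\<Union>S = {..<n}")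
    case True
    have "4/3 * real (card (\<Union>S)) \<le> 2 * real (card S)"
      using fin fin_edges edge_sum weight_vertex_sum_ge_4_3[OF fin] by (rule discharging)
    then show ?thesis using True by simp
  next
    case False
    then obtain z where z: "z < n" "z \<notin> \<Union>S" using covered by auto
    have "\<Union>S = {..<n} - {z}"
      using covered z separating_isolated_unique[OF sep] n by fastforce
    then have "card (\<Union>S) = n - 1" using z by simp
    moreover have "3/2 * real (card (\<Union>S)) \<le> 2 * real (card S)"
      using fin fin_edges edge_sum
    proof (rule discharging)
      fix x assume "x \<in> \<Union>S"
      then show "3/2 \<le> (\<Sum>p\<in>{p \<in> S. x \<in> p}. weight (3/2) S x p)"
        using weight_vertex_sum_ge_3_2[OF fin] separating_no_cherry[OF sep z] by blast
    qed
    ultimately have "3 * (n - 1) \<le> 4 * card S" by linarith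
    then show ?thesis using n by linarith
  qed
qed

lemma nat_ceiling_two_thirds: "nat \<lceil>2 * real n / 3\<rceil> = n - n div 3"
proof -
  have "\<lceil>2 * real n / 3\<rceil> = int (n - n div 3)"
  proof (rule ceiling_unique)
    have "n = 3 * (n div 3) + n mod 3" "n mod 3 < 3" by simp_all
    then have "real n = 3 * real (n div 3) + real (n mod 3)" "real (n mod 3) < 3"
      by (metis of_nat_add of_nat_mult of_nat_numeral, simp)
    then show "of_int (int (n - n div 3)) - 1 < 2 * real n / 3"
      "2 * real n / 3 \<le> of_int (int (n - n div 3))"
      by (simp_all add: of_nat_diff field_simps)
  qed
  then show ?thesis by simp
qed

theorem theorem2p1:
  fixes n :: nat
  assumes "n \<ge> 6"
  shows "min_measurements {..<n} (complete_edges n) = nat \<lceil>2 * real n / 3\<rceil>"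
proof -
  have n: "3 \<le> n" using assms by simp
  interpret star_forest n "block_centre n" by (rule star_forest_block_centre[OF n])
  have "(LEAST k. \<exists>S. solves_fed {..<n} (complete_edges n) S \<and> card S = k) = n - n div 3"
  proof (rule Least_equality)
    show "\<exists>S. solves_fed {..<n} (complete_edges n) S \<and> card S = n - n div 3"
      using separating_star_edges card_star_edges card_block_leaves[OF n]
      by (auto simp: solves_fed_complete_iff_separating[OF n])
  next
    fix k assume "\<exists>S. solves_fed {..<n} (complete_edges n) S \<and> card S = k"
    then obtain S where "separating n S" "card S = k"
      by (auto simp: solves_fed_complete_iff_separating[OF n])
    then have "2 * n \<le> 3 * k" using separating_card_ge assms by blast
    then show "n - n div 3 \<le> k" by linarith
  qed
  then show ?thesis unfolding min_measurements_def nat_ceiling_two_thirds .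
qed

end
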